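(* Fix $P>0$ and $\sigma>0$ and let $\lambda_n:=2\Phi(-\log n)$. For every sufficiently large $n$ there exists an $(n,N,\lambda_n,\lambda_n)$ DI code for the AWGN channel with noise standard deviation $\sigma$ and power constraint $P$ whose code words $u_1,\dots,u_N$ form a $d$-angle-dense arrangement on the sphere $\{x\in\mathbb{R}^n:\|x\|=\sqrt{nP}\}$ with $d=2\sigma\log n$, whose decoding sets are \[ \mathcal{D}_i=\{y\in\mathbb{R}^n:\ \|\Pi_{\vec u_i}\vec y-\vec u_i\|\le \sigma\log n\}, \] and which satisfies $\frac{\log N}{n\log n}\ge \frac14-o(1)$ as $n\to\infty$. In particular, since $\lambda_n\to0$, the linearithmic rate $\dot R=\frac14$ is achievable.
   Context: AWGN channel: on input $x^n\in\mathbb{R}^n$ the output is $Y^n=x^n+\sigma Z^n$ with $Z^n$ having i.i.d. $\mathcal{N}(0,1)$ components; i.e. the output distribution is $\mathcal{G}_{x^n}=\mathcal{N}(x^n,\sigma^2 I_n)$. Admissible inputs satisfy the power constraint $\|x^n\|^2\le nP$. An $(n,N,\lambda_1,\lambda_2)$ DI (deterministic identification) code is a family $\{(u_i,\mathcal{D}_i)\}_{i=1}^N$ of admissible input sequences $u_i\in\mathbb{R}^n$ and measurable sets $\mathcal{D}_i\subseteq\mathbb{R}^n$ such that for all $i\neq j$: $\mathcal{G}_{u_i}(\mathcal{D}_i)\ge 1-\lambda_1$ and $\mathcal{G}_{u_j}(\mathcal{D}_i)\le\lambda_2$. A number $\dot R>0$ is an achievable linearithmic rate if for every $\epsilon>0$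 there are $n_0$ and $(n,N^{(n)},\lambda_1^{(n)},\lambda_2^{(n)})$ DI codes for all $n\ge n_0$ with $\lambda_1^{(n)},\lambda_2^{(n)}\to0$ and $\frac{\log N^{(n)}}{n\log n}\ge \dot R-\epsilon$. $\Phi$ is the standard Gaussian cumulative distribution function. $\Pi_{\vec a}\vec v:=\frac{(\vec a,\vec v)}{\|\vec a\|^2}\vec a$ is orthogonal projection onto the line spanned by $\vec a\neq0$. An arrangement $\{u_j\}$ on a sphere centred at the origin is $d$-angle-dense if $\|\Pi_{\vec u_k}\vec u_j-\vec u_k\|\ge d$ for all $j\neq k$. Logarithms are to base 2. *)

theory Defs
  imports "HOL-Probability.Probability"
begin

text \<open>Vectors of R^n are represented as functions nat => real; only the
coordinates 0..n-1 matter. The output space R^n is the space of the product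
measure over the index set {..<n}.\<close>

definition Rn :: "nat \<Rightarrow> (nat \<Rightarrow> real) set" where
  "Rn n = PiE {..<n} (\<lambda>_. (UNIV :: real set))"

definition inner_n :: "nat \<Rightarrow> (nat \<Rightarrow> real) \<Rightarrow> (nat \<Rightarrow> real) \<Rightarrow> real" where
  "inner_n n x y = (\<Sum>i<n. x i * y i)"

definition norm_n :: "nat \<Rightarrow> (nat \<Rightarrow> real) \<Rightarrow> real" where
  "norm_n n x = sqrt (inner_n n x x)"

definition proj_n :: "nat \<Rightarrow> (nat \<Rightarrow> real) \<Rightarrow> (nat \<Rightarrow> real) \<Rightarrow> (nat \<Rightarrow> real)" where
  "proj_n n a v = (\<lambda>i. (inner_n n a v / inner_n n a a) * a i)"

definition gauss_out :: "nat \<Rightarrow> real \<Rightarrow> (nat \<Rightarrow> real) \<Rightarrow> (nat \<Rightarrow> real) measure" where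
  "gauss_out n \<sigma> x = PiM {..<n} (\<lambda>i. density lborel (normal_density (x i) \<sigma>))"

definition Phi :: "real \<Rightarrow> real" where
  "Phi t = measure (density lborel std_normal_density) {..t}"

definition DI_code :: "nat \<Rightarrow> real \<Rightarrow> real \<Rightarrow> nat \<Rightarrow> real \<Rightarrow> real \<Rightarrow>
    (nat \<Rightarrow> nat \<Rightarrow> real) \<Rightarrow> (nat \<Rightarrow> (nat \<Rightarrow> real) set) \<Rightarrow> bool" where
  "DI_code n P \<sigma> N l1 l2 u D \<longleftrightarrow>
     (\<forall>i<N. (norm_n n (u i))\<^sup>2 \<le> real n * P) \<and>
     (\<forall>i<N. D i \<in> sets (gauss_out n \<sigma> (u i))) \<and>
     (\<forall>i<N. measure (gauss_out n \<sigma> (u i)) (D i) \<ge> 1 - l1) \<and>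
     (\<forall>i<N. \<forall>j<N. i \<noteq> j \<longrightarrow> measure (gauss_out n \<sigma> (u j)) (D i) \<le> l2)"

definition angle_dense :: "nat \<Rightarrow> nat \<Rightarrow> (nat \<Rightarrow> nat \<Rightarrow> real) \<Rightarrow> real \<Rightarrow> bool" where
  "angle_dense n N u d \<longleftrightarrow>
     (\<forall>j<N. \<forall>k<N. j \<noteq> k \<longrightarrow> norm_n n (\<lambda>i. proj_n n (u k) (u j) i - u k i) \<ge> d)"

definition achievable_lin_rate :: "real \<Rightarrow> real \<Rightarrow> real \<Rightarrow> bool" where
  "achievable_lin_rate P \<sigma> R \<longleftrightarrow> R > 0 \<and>
     (\<forall>\<epsilon>>0. \<exists>n0 (l1::nat\<Rightarrow>real) (l2::nat\<Rightarrow>real).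
        l1 \<longlonglongrightarrow> 0 \<and> l2 \<longlonglongrightarrow> 0 \<and>
        (\<forall>n\<ge>n0. \<exists>N u D. DI_code n P \<sigma> N (l1 n) (l2 n) u D \<and>
           log 2 (real N) / (real n * log 2 (real n)) \<ge> R - \<epsilon>))"

end

theory Submission
  imports Defs "HOL-Real_Asymp.Real_Asymp"
begin

text \<open>A codeword \<open>u\<close> of norm \<open>r\<close> is decoded by the event
\<open>|<u, Y> - r\<^sup>2| \<le> \<sigma> r log n\<close>, which is exactly the set \<open>D\<^sub>u\<close> of the statement. As
\<open><u, Y>\<close> is normal with mean \<open><u, x>\<close> and standard deviation \<open>\<sigma> r\<close>, this event fails for
input \<open>u\<close> with probability at most \<open>2 \<Phi>(-log n)\<close>, and it occurs for input \<open>x\<close> with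
probability at most \<open>\<Phi>(-log n)\<close> once \<open><u, x> \<le> r\<^sup>2 - 2 \<sigma> r log n\<close>; for codewords on a
common sphere this gap is the same as \<open>2 \<sigma> log n\<close>-angle-density.

The codewords are rescaled points of the cube \<open>{1..m}\<^sup>n\<close> with \<open>m \<approx> n powr (1/4) / log\<^sup>2 n\<close>.
By pigeonhole a fraction \<open>1 / (n m\<^sup>2)\<close> of the cube lies on one sphere, and a greedy choice
keeps points at pairwise squared distance at least \<open>R\<close> while losing only the factor
\<open>(3n)\<^sup>R + 1\<close>, as \<open>(3n)\<^sup>R\<close> bounds the number of integer vectors of l1-norm at most \<open>R\<close>.
After rescaling to radius \<open>sqrt (n P)\<close>, the separation \<open>R \<approx> 4 \<sigma> n / (sqrt P log\<^sup>3 n)\<close>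
yields the required gap, and \<open>log N \<ge> n log m - O(R log n) = n log n / 4 - o(n log n)\<close>.\<close>

section \<open>Gaussian channel outputs\<close>

lemma real_distribution_std_normal: "real_distribution (density lborel std_normal_density)"
  by (simp add: real_distribution_def real_distribution_axioms_def prob_space_normal_density)

lemma Phi_eq_cdf: "Phi = cdf (density lborel std_normal_density)"
  by (simp add: Phi_def cdf_def fun_eq_iff)

lemma Phi_nonneg: "Phi t \<ge> 0"
  by (simp add: Phi_def)

lemma Phi_tendsto_at_bot: "(Phi \<longlongrightarrow> 0) at_bot"
proof -
  interpret real_distribution "density lborel std_normal_density"
    by (rule real_distribution_std_normal)
  show ?thesis
    unfolding Phi_eq_cdf by (rule cdf_lim_at_bot)
qed

lemma Phi_neg_log_tendsto_0: "(\<lambda>n::nat. Phi (- log 2 (real n))) \<longlonglongrightarrow> 0"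
proof -
  have "filterlim (\<lambda>n::nat. - log 2 (real n)) at_bot sequentially"
    by real_asymp
  then show ?thesis
    by (rule filterlim_compose[OF Phi_tendsto_at_bot])
qed

lemma prob_space_gauss_out: "\<sigma> > 0 \<Longrightarrow> prob_space (gauss_out n \<sigma> x)"
  unfolding gauss_out_def by (intro prob_space_PiM prob_space_normal_density)

lemma space_gauss_out: "space (gauss_out n \<sigma> x) = Rn n"
  unfolding gauss_out_def Rn_def by (simp add: space_PiM)

lemma distr_gauss_out_component:
  assumes "\<sigma> > 0" "k < n"
  shows "distr (gauss_out n \<sigma> x) borel (\<lambda>y. y k) = density lborel (normal_density (x k) \<sigma>)"
proof -
  have "distr (gauss_out n \<sigma> x) borel (\<lambda>y. y k)
      = distr (gauss_out n \<sigma> x) (density lborel (normal_density (x k) \<sigma>)) (\<lambda>y. y k)"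
    by (rule distr_cong) auto
  also have "\<dots> = density lborel (normal_density (x k) \<sigma>)"
    unfolding gauss_out_def using assms
    by (intro distr_PiM_component prob_space_normal_density) auto
  finally show ?thesis .
qed

lemma distributed_gauss_out_component:
  assumes "\<sigma> > 0" "k < n"
  shows "distributed (gauss_out n \<sigma> x) lborel (\<lambda>y. y k) (normal_density (x k) \<sigma>)"
proof -
  have "distr (gauss_out n \<sigma> x) lborel (\<lambda>y. y k) = distr (gauss_out n \<sigma> x) borel (\<lambda>y. y k)"
    by (rule distr_cong) auto
  then show ?thesis
    using distr_gauss_out_component[OF assms] assms
    by (auto simp: distributed_def gauss_out_def measurable_component_singleton)
qed

lemma indep_vars_gauss_out_components:
  assumes "\<sigma> > 0" "n > 0"
  shows "prob_space.indep_vars (gauss_out n \<sigma> x) (\<lambda>_. borel) (\<lambda>k y. y k) {..<n}"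
proof -
  interpret prob_space "gauss_out n \<sigma> x"
    using assms(1) by (rule prob_space_gauss_out)
  have sets_eq: "sets (gauss_out n \<sigma> x) = sets (\<Pi>\<^sub>M k\<in>{..<n}. borel)"
    unfolding gauss_out_def by (rule sets_PiM_cong) auto
  have "distr (gauss_out n \<sigma> x) (\<Pi>\<^sub>M k\<in>{..<n}. borel) (\<lambda>y. \<lambda>k\<in>{..<n}. y k)
      = distr (gauss_out n \<sigma> x) (gauss_out n \<sigma> x) (\<lambda>y. y)"
    by (rule distr_cong) (simp_all add: sets_eq space_gauss_out Rn_def)
  also have "\<dots> = gauss_out n \<sigma> x"
    by (rule distr_id2) simp
  also have "\<dots> = (\<Pi>\<^sub>M k\<in>{..<n}. density lborel (normal_density (x k) \<sigma>))"
    by (rule gauss_out_def)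
  also have "\<dots> = (\<Pi>\<^sub>M k\<in>{..<n}. distr (gauss_out n \<sigma> x) borel (\<lambda>y. y k))"
    by (intro PiM_cong) (simp_all add: distr_gauss_out_component[OF assms(1)])
  finally show ?thesis
    using assms(2) by (subst indep_vars_iff_distr_eq_PiM') (auto simp: gauss_out_def)
qed

lemma distributed_gauss_out_inner:
  assumes "\<sigma> > 0" "n > 0" "\<And>k. k < n \<Longrightarrow> a k \<noteq> 0"
  shows "distributed (gauss_out n \<sigma> x) lborel (inner_n n a)
           (normal_density (inner_n n a x) (\<sigma> * norm_n n a))"
proof -
  interpret prob_space "gauss_out n \<sigma> x"
    using assms(1) by (rule prob_space_gauss_out)
  have indep: "indep_vars (\<lambda>_. borel) (\<lambda>k y. a k * y k) {..<n}"
    using indep_vars_gauss_out_components[OF assms(1,2)] by (rule indep_vars_compose2) auto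
  have summands: "distributed (gauss_out n \<sigma> x) lborel (\<lambda>y. a k * y k)
      (normal_density (a k * x k) (\<bar>a k\<bar> * \<sigma>))" if "k \<in> {..<n}" for k
    using normal_density_affine[OF distributed_gauss_out_component[OF assms(1), of k n x] assms(1),
        of "a k" 0] assms that
    by simp
  have "distributed (gauss_out n \<sigma> x) lborel (\<lambda>y. \<Sum>k\<in>{..<n}. a k * y k)
      (normal_density (\<Sum>k\<in>{..<n}. a k * x k) (sqrt (\<Sum>k\<in>{..<n}. (\<bar>a k\<bar> * \<sigma>)\<^sup>2)))"
    by (rule sum_indep_normal[OF _ _ indep _ summands]) (use assms in auto)
  moreover have "sqrt (\<Sum>k<n. (\<bar>a k\<bar> * \<sigma>)\<^sup>2) = \<sigma> * norm_n n a"
    using assms(1)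
    by (simp add: norm_n_def inner_n_def power_mult_distrib real_sqrt_mult
        flip: sum_distrib_right power2_eq_square)
  moreover have "inner_n n a = (\<lambda>y. \<Sum>k\<in>{..<n}. a k * y k)"
    by (simp add: fun_eq_iff inner_n_def)
  ultimately show ?thesis
    by simp
qed

lemma (in prob_space) prob_normal_le:
  assumes "distributed M lborel W (normal_density \<mu> s)" "s > 0"
  shows "prob {y \<in> space M. W y \<le> \<mu> + s * t} = Phi t"
proof -
  have std: "distributed M lborel (\<lambda>y. (W y - \<mu>) / s) std_normal_density"
    using normal_standard_normal_convert[OF assms(2)] assms(1) by simp
  have "{y \<in> space M. W y \<le> \<mu> + s * t} = (\<lambda>y. (W y - \<mu>) / s) -` {..t} \<inter> space M"
    using assms(2) by (auto simp: pos_divide_le_eq mult.commute diff_le_eq add.commute)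
  also have "prob \<dots> = measure (distr M lborel (\<lambda>y. (W y - \<mu>) / s)) {..t}"
    using distributed_measurable[OF std] by (simp add: measure_distr)
  also have "\<dots> = Phi t"
    unfolding distributed_distr_eq_density[OF std] Phi_def ..
  finally show ?thesis .
qed

lemma (in prob_space) prob_normal_ge:
  assumes "distributed M lborel W (normal_density \<mu> s)" "s > 0"
  shows "prob {y \<in> space M. \<mu> + s * t \<le> W y} = Phi (- t)"
proof -
  have "distributed M lborel (\<lambda>y. 0 + (-1) * W y) (normal_density (0 + (-1) * \<mu>) (\<bar>-1\<bar> * s))"
    using assms by (intro normal_density_affine) simp_all
  then have "prob {y \<in> space M. - W y \<le> - \<mu> + s * (- t)} = Phi (- t)"
    using assms(2) by (intro prob_normal_le) simp_all
  then show ?thesis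
    by (simp add: algebra_simps)
qed

lemma (in prob_space) prob_normal_near_mean:
  assumes "distributed M lborel W (normal_density \<mu> s)" "s > 0"
  shows "prob {y \<in> space M. \<bar>W y - \<mu>\<bar> \<le> s * L} \<ge> 1 - 2 * Phi (- L)"
proof -
  note W_meas [measurable] = distributed_measurable[OF assms(1), unfolded measurable_lborel1]
  let ?low = "{y \<in> space M. W y \<le> \<mu> + s * (- L)}" and ?high = "{y \<in> space M. \<mu> + s * L \<le> W y}"
  have "space M - {y \<in> space M. \<bar>W y - \<mu>\<bar> \<le> s * L} \<subseteq> ?low \<union> ?high"
    by (auto simp: abs_le_iff)
  then have "prob (space M - {y \<in> space M. \<bar>W y - \<mu>\<bar> \<le> s * L}) \<le> prob (?low \<union> ?high)"
    by (intro finite_measure_mono) measurable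
  also have "\<dots> \<le> prob ?low + prob ?high"
    by (intro measure_subadditive) measurable
  also have "\<dots> = 2 * Phi (- L)"
    using prob_normal_le[OF assms, of "- L"] prob_normal_ge[OF assms, of L] by simp
  finally show ?thesis
    by (subst (asm) prob_compl) measurable
qed

lemma (in prob_space) prob_normal_near_distant_point:
  assumes "distributed M lborel W (normal_density \<mu> s)" "s > 0" "\<mu> + 2 * s * L \<le> c"
  shows "prob {y \<in> space M. \<bar>W y - c\<bar> \<le> s * L} \<le> Phi (- L)"
proof -
  note W_meas [measurable] = distributed_measurable[OF assms(1), unfolded measurable_lborel1]
  have "{y \<in> space M. \<bar>W y - c\<bar> \<le> s * L} \<subseteq> {y \<in> space M. \<mu> + s * L \<le> W y}"
    using assms(3) by auto
  then have "prob {y \<in> space M. \<bar>W y - c\<bar> \<le> s * L} \<le> prob {y \<in> space M. \<mu> + s * L \<le> W y}"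
    by (intro finite_measure_mono) auto
  also have "\<dots> = Phi (- L)"
    by (rule prob_normal_ge[OF assms(1,2)])
  finally show ?thesis .
qed

section \<open>Decoding by projection\<close>

lemma inner_n_self: "inner_n n u u = (norm_n n u)\<^sup>2"
  by (simp add: norm_n_def inner_n_def sum_nonneg)

lemma norm_n_mult: "norm_n n (\<lambda>k. c * u k) = \<bar>c\<bar> * norm_n n u"
  by (simp add: norm_n_def inner_n_def real_sqrt_mult mult_ac flip: sum_distrib_left)

lemma norm_n_pos:
  assumes "n > 0" "\<forall>k<n. u k \<noteq> 0"
  shows "norm_n n u > 0"
proof -
  have "0 < u 0 * u 0"
    using assms by (auto simp: zero_less_mult_iff linorder_neq_iff)
  also have "\<dots> \<le> inner_n n u u"
    unfolding inner_n_def using assms(1) by (intro member_le_sum) auto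
  finally show ?thesis
    by (simp add: norm_n_def)
qed

lemma norm_proj_n_diff:
  assumes "norm_n n u > 0"
  shows "norm_n n (\<lambda>k. proj_n n u y k - u k) = \<bar>inner_n n u y - (norm_n n u)\<^sup>2\<bar> / norm_n n u"
proof -
  let ?r = "norm_n n u"
  have "(\<lambda>k. proj_n n u y k - u k) = (\<lambda>k. (inner_n n u y / ?r\<^sup>2 - 1) * u k)"
    by (simp add: proj_n_def inner_n_self algebra_simps)
  then have "norm_n n (\<lambda>k. proj_n n u y k - u k) = \<bar>(inner_n n u y - ?r\<^sup>2) / ?r\<^sup>2\<bar> * ?r"
    using assms by (simp add: norm_n_mult diff_divide_distrib)
  then show ?thesis
    using assms by (simp add: abs_div power2_eq_square)
qed

definition decoding_set :: "nat \<Rightarrow> real \<Rightarrow> (nat \<Rightarrow> real) \<Rightarrow> (nat \<Rightarrow> real) set" where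
  "decoding_set n \<rho> u = {y \<in> Rn n. norm_n n (\<lambda>k. proj_n n u y k - u k) \<le> \<rho>}"

lemma decoding_set_gauss_out:
  assumes "\<sigma> > 0" "n > 0" "\<forall>k<n. u k \<noteq> 0"
  shows "decoding_set n (\<sigma> * L) u \<in> sets (gauss_out n \<sigma> x)"
    and "measure (gauss_out n \<sigma> u) (decoding_set n (\<sigma> * L) u) \<ge> 1 - 2 * Phi (- L)"
    and "inner_n n u x + 2 * \<sigma> * L * norm_n n u \<le> (norm_n n u)\<^sup>2 \<Longrightarrow>
           measure (gauss_out n \<sigma> x) (decoding_set n (\<sigma> * L) u) \<le> Phi (- L)"
proof -
  let ?r = "norm_n n u"
  have r: "?r > 0"
    using assms(2,3) by (rule norm_n_pos)
  have D_eq: "decoding_set n (\<sigma> * L) u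
      = {y \<in> space (gauss_out n \<sigma> x). \<bar>inner_n n u y - ?r\<^sup>2\<bar> \<le> (\<sigma> * ?r) * L}" for x
    using r by (auto simp: decoding_set_def space_gauss_out norm_proj_n_diff divide_le_eq mult_ac)
  have W: "distributed (gauss_out n \<sigma> x) lborel (inner_n n u)
      (normal_density (inner_n n u x) (\<sigma> * ?r))" for x
    using assms by (intro distributed_gauss_out_inner) auto
  have s: "\<sigma> * ?r > 0"
    using assms(1) r by simp
  show "decoding_set n (\<sigma> * L) u \<in> sets (gauss_out n \<sigma> x)"
    unfolding D_eq[of x] using distributed_measurable[OF W, unfolded measurable_lborel1]
    by measurable
  show "measure (gauss_out n \<sigma> u) (decoding_set n (\<sigma> * L) u) \<ge> 1 - 2 * Phi (- L)"
    using prob_space.prob_normal_near_mean[OF prob_space_gauss_out[OF assms(1)] W[of u] s]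
    unfolding D_eq[of u] by (simp add: inner_n_self)
  show "measure (gauss_out n \<sigma> x) (decoding_set n (\<sigma> * L) u) \<le> Phi (- L)"
    if "inner_n n u x + 2 * \<sigma> * L * ?r \<le> ?r\<^sup>2"
    using prob_space.prob_normal_near_distant_point[OF prob_space_gauss_out[OF assms(1)] W s] that
    unfolding D_eq[of x] by (simp add: mult_ac)
qed

text \<open>Codewords must not have a zero coordinate: otherwise a summand \<open>u\<^sub>k Y\<^sub>k\<close> of
\<open><u, Y>\<close> is constant rather than normal, and \<open>distributed_gauss_out_inner\<close> does not
apply.\<close>

definition spherical_code :: "nat \<Rightarrow> real \<Rightarrow> real \<Rightarrow> nat \<Rightarrow> (nat \<Rightarrow> nat \<Rightarrow> real) \<Rightarrow> bool" where
  "spherical_code n r \<delta> N u \<longleftrightarrow>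
     (\<forall>i<N. \<forall>k<n. u i k \<noteq> 0) \<and> (\<forall>i<N. norm_n n (u i) = r) \<and>
     (\<forall>i<N. \<forall>j<N. i \<noteq> j \<longrightarrow> inner_n n (u i) (u j) + \<delta> \<le> r\<^sup>2)"

lemma spherical_code_mono:
  "spherical_code n r \<delta> N u \<Longrightarrow> \<delta>' \<le> \<delta> \<Longrightarrow> spherical_code n r \<delta>' N u"
  unfolding spherical_code_def by force

lemma spherical_code_angle_dense:
  assumes "r > 0" "spherical_code n r \<delta> N u"
  shows "angle_dense n N u (\<delta> / r)"
  unfolding angle_dense_def
proof (intro allI impI)
  fix j k assume "j < N" "k < N" "j \<noteq> k"
  then have "\<delta> \<le> r\<^sup>2 - inner_n n (u k) (u j)" "norm_n n (u k) = r"
    using assms(2) unfolding spherical_code_def by (metis le_diff_eq add.commute)+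
  then show "\<delta> / r \<le> norm_n n (\<lambda>i. proj_n n (u k) (u j) i - u k i)"
    using assms(1) by (simp add: norm_proj_n_diff divide_right_mono)
qed

lemma spherical_code_DI_code:
  assumes "\<sigma> > 0" "n > 0" "r\<^sup>2 \<le> real n * P" "spherical_code n r (2 * \<sigma> * L * r) N u"
  shows "DI_code n P \<sigma> N (2 * Phi (- L)) (2 * Phi (- L)) u (\<lambda>i. decoding_set n (\<sigma> * L) (u i))"
  unfolding DI_code_def
proof (intro conjI allI impI)
  fix i assume i: "i < N"
  then have code_i: "\<forall>k<n. u i k \<noteq> 0" "norm_n n (u i) = r"
    using assms(4) by (auto simp: spherical_code_def)
  note decoding = decoding_set_gauss_out[OF assms(1,2) code_i(1), where L=L]
  show "(norm_n n (u i))\<^sup>2 \<le> real n * P"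
    using code_i(2) assms(3) by simp
  show "decoding_set n (\<sigma> * L) (u i) \<in> sets (gauss_out n \<sigma> (u i))"
    by (rule decoding(1))
  show "1 - 2 * Phi (- L) \<le> measure (gauss_out n \<sigma> (u i)) (decoding_set n (\<sigma> * L) (u i))"
    by (rule decoding(2))
  fix j assume "j < N" "i \<noteq> j"
  then have "inner_n n (u i) (u j) + 2 * \<sigma> * L * norm_n n (u i) \<le> (norm_n n (u i))\<^sup>2"
    using assms(4) i code_i(2) by (auto simp: spherical_code_def)
  then show "measure (gauss_out n \<sigma> (u j)) (decoding_set n (\<sigma> * L) (u i)) \<le> 2 * Phi (- L)"
    using decoding(3) Phi_nonneg[of "- L"] by fastforce
qed

lemma DI_code_of_spherical_code:
  fixes P \<sigma> L :: real
  assumes "P > 0" "\<sigma> > 0" "n > 0"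
    and "spherical_code n (sqrt (n * P)) (2 * \<sigma> * L * sqrt (n * P)) N u"
  shows "DI_code n P \<sigma> N (2 * Phi (- L)) (2 * Phi (- L)) u (\<lambda>i. decoding_set n (\<sigma> * L) (u i)) \<and>
         (\<forall>i<N. norm_n n (u i) = sqrt (n * P)) \<and> angle_dense n N u (2 * \<sigma> * L)"
proof -
  have r: "sqrt (n * P) > 0" "(sqrt (n * P))\<^sup>2 = n * P"
    using assms(1,3) by simp_all
  have "2 * \<sigma> * L * sqrt (n * P) / sqrt (n * P) = 2 * \<sigma> * L"
    using r(1) by (intro nonzero_mult_div_cancel_right) (rule less_imp_neq[symmetric])
  then show ?thesis
    using spherical_code_DI_code[OF assms(2,3) _ assms(4)] r
      spherical_code_angle_dense[OF r(1) assms(4)] assms(4)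
    unfolding spherical_code_def by simp
qed

section \<open>Lattice codes on a sphere\<close>

lemma bounded_degree_independent_subset:
  assumes "finite X" "\<And>x y. Rel x y \<longleftrightarrow> Rel y x" "\<And>x. x \<in> X \<Longrightarrow> card {y \<in> X. Rel x y} \<le> K"
  shows "\<exists>C\<subseteq>X. card X \<le> (K + 1) * card C \<and> (\<forall>x\<in>C. \<forall>y\<in>C. x \<noteq> y \<longrightarrow> \<not> Rel x y)"
  using assms(1,3)
proof (induction "card X" arbitrary: X rule: less_induct)
  case less
  show ?case
  proof (cases "X = {}")
    case True
    then show ?thesis by auto
  next
    case False
    then obtain x where x: "x \<in> X" by blast
    define B where "B = insert x {y \<in> X. Rel x y}"
    have B: "B \<subseteq> X" "x \<in> B"
      using x by (auto simp: B_def)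
    have "card B \<le> K + 1"
      using less.prems x by (simp add: B_def card_insert_if le_SucI)
    have fin: "finite (X - B)" "finite B"
      using less.prems(1) B(1) by (auto intro: finite_subset)
    have "card (X - B) < card X"
      using B less.prems(1) by (intro psubset_card_mono) auto
    moreover have "card {y \<in> X - B. Rel z y} \<le> K" if "z \<in> X - B" for z
      by (rule le_trans[OF card_mono less.prems(2)]) (use less.prems(1) that in auto)
    ultimately have "\<exists>C\<subseteq>X - B. card (X - B) \<le> (K + 1) * card C \<and>
        (\<forall>x\<in>C. \<forall>y\<in>C. x \<noteq> y \<longrightarrow> \<not> Rel x y)"
      by (rule less.hyps[OF _ fin(1)])
    then obtain C where C: "C \<subseteq> X - B" "card (X - B) \<le> (K + 1) * card C"
        "\<forall>x\<in>C. \<forall>y\<in>C. x \<noteq> y \<longrightarrow> \<not> Rel x y"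
      by blast
    have "card X = card (X - B) + card B"
      using card_Diff_subset[OF fin(2) B(1)] card_mono[OF less.prems(1) B(1)] by simp
    also have "\<dots> \<le> (K + 1) * card C + (K + 1)"
      using C(2) \<open>card B \<le> K + 1\<close> by linarith
    also have "\<dots> = (K + 1) * card (insert x C)"
      using C(1) B(2) finite_subset[OF C(1) fin(1)] by (subst card_insert_disjoint) auto
    finally have "card X \<le> (K + 1) * card (insert x C)" .
    moreover have "\<forall>y\<in>C. \<not> Rel x y"
      using C(1) unfolding B_def by blast
    ultimately show ?thesis
      using C(1,3) B assms(2) by (intro exI[of _ "insert x C"]) auto
  qed
qed

definition int_l1_ball :: "nat \<Rightarrow> nat \<Rightarrow> (nat \<Rightarrow> int) set" where
  "int_l1_ball n s = {z. (\<forall>i\<ge>n. z i = 0) \<and> (\<Sum>i<n. \<bar>z i\<bar>) \<le> int s}"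

lemma int_l1_ball_0: "int_l1_ball n 0 = {\<lambda>_. 0}"
proof -
  have "z i = 0" if "z \<in> int_l1_ball n 0" for z i
    using that sum_nonneg_eq_0_iff[of "{..<n}" "\<lambda>i. \<bar>z i\<bar>"]
    by (cases "i < n") (auto simp: int_l1_ball_def intro: antisym[OF _ sum_nonneg])
  then show ?thesis
    by (auto simp: int_l1_ball_def)
qed

lemma int_l1_ball_Suc_subset:
  assumes "n > 0"
  shows "int_l1_ball n (Suc s)
           \<subseteq> (\<lambda>(z, i, e). z(i := z i + e)) ` (int_l1_ball n s \<times> {..<n} \<times> {-1, 0, 1})"
proof
  fix z assume z: "z \<in> int_l1_ball n (Suc s)"
  show "z \<in> (\<lambda>(z, i, e). z(i := z i + e)) ` (int_l1_ball n s \<times> {..<n} \<times> {-1, 0, 1})"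
  proof (cases "\<exists>i<n. z i \<noteq> 0")
    case True
    then obtain i where i: "i < n" "z i \<noteq> 0" by blast
    define z' where "z' = z(i := z i - sgn (z i))"
    have "\<bar>z' i\<bar> + 1 = \<bar>z i\<bar>"
      using i(2) by (auto simp: z'_def sgn_if)
    then have "(\<Sum>j<n. \<bar>z' j\<bar>) + 1 = (\<Sum>j<n. \<bar>z j\<bar>)"
      using i(1) by (simp add: sum.remove[of "{..<n}" i] z'_def)
    then have "z' \<in> int_l1_ball n s"
      using z i(1) by (auto simp: int_l1_ball_def z'_def)
    moreover have "z = z'(i := z' i + sgn (z i))"
      by (simp add: z'_def)
    ultimately show ?thesis
      using i(1) by (intro image_eqI[of _ _ "(z', i, sgn (z i))"]) (auto simp: sgn_if)
  next
    case False
    have "z = (\<lambda>_. 0)"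
    proof
      fix i
      show "z i = 0"
        using False z by (cases "i < n") (auto simp: int_l1_ball_def)
    qed
    then have "z = z(0 := z 0 + 0)" "z \<in> int_l1_ball n s"
      by (auto simp: int_l1_ball_def)
    then show ?thesis
      using assms by (intro image_eqI[of _ _ "(z, 0, 0)"]) auto
  qed
qed

lemma finite_int_l1_ball:
  assumes "n > 0"
  shows "finite (int_l1_ball n s)"
proof (induction s)
  case 0
  then show ?case by (simp add: int_l1_ball_0)
next
  case (Suc s)
  show ?case
    by (rule finite_subset[OF int_l1_ball_Suc_subset[OF assms]]) (use Suc in auto)
qed

lemma card_int_l1_ball_le:
  assumes "n > 0"
  shows "card (int_l1_ball n s) \<le> (3 * n) ^ s"
proof (induction s)
  case 0
  then show ?case by (simp add: int_l1_ball_0)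
next
  case (Suc s)
  have "card (int_l1_ball n (Suc s))
      \<le> card ((\<lambda>(z, i, e). z(i := z i + e)) ` (int_l1_ball n s \<times> {..<n} \<times> ({-1, 0, 1} :: int set)))"
    using int_l1_ball_Suc_subset[OF assms] finite_int_l1_ball[OF assms] by (intro card_mono) auto
  also have "\<dots> \<le> card (int_l1_ball n s) * (n * 3)"
    by (rule card_image_le[THEN order_trans])
      (simp_all add: card_cartesian_product finite_int_l1_ball[OF assms])
  also have "\<dots> \<le> (3 * n) ^ Suc s"
    using Suc by (simp add: mult.commute)
  finally show ?case .
qed

lemma abs_le_power2_int: "\<bar>k :: int\<bar> \<le> k\<^sup>2"
proof (cases "k = 0")
  case False
  then have "\<bar>k\<bar> * 1 \<le> \<bar>k\<bar> * \<bar>k\<bar>"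
    by (intro mult_left_mono) auto
  then show ?thesis
    by (simp add: power2_eq_square)
qed simp

lemma exists_separated_subset:
  fixes Y :: "(nat \<Rightarrow> int) set"
  assumes "finite Y" "n > 0" "Y \<subseteq> extensional {..<n}"
  shows "\<exists>C\<subseteq>Y. card Y \<le> ((3 * n) ^ R + 1) * card C \<and>
           (\<forall>x\<in>C. \<forall>y\<in>C. x \<noteq> y \<longrightarrow> int R \<le> (\<Sum>i<n. (x i - y i)\<^sup>2))"
proof -
  define close where "close x y \<longleftrightarrow> (\<Sum>i<n. (x i - y i)\<^sup>2) < int R" for x y :: "nat \<Rightarrow> int"
  have close_sym: "close x y \<longleftrightarrow> close y x" for x y
    unfolding close_def by (simp add: power2_commute)
  have "card {y \<in> Y. close x y} \<le> (3 * n) ^ R" if x: "x \<in> Y" for x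
  proof -
    have "(\<lambda>i. y i - x i) \<in> int_l1_ball n R" if y: "y \<in> Y" "close x y" for y
    proof -
      have "x \<in> extensional {..<n}" "y \<in> extensional {..<n}"
        using assms(3) x y(1) by auto
      then have "\<forall>i\<ge>n. y i - x i = 0"
        by (simp add: extensional_def)
      moreover have "(\<Sum>i<n. \<bar>y i - x i\<bar>) \<le> (\<Sum>i<n. (x i - y i)\<^sup>2)"
        by (intro sum_mono) (subst power2_commute, rule abs_le_power2_int)
      with y(2) have "(\<Sum>i<n. \<bar>y i - x i\<bar>) \<le> int R"
        unfolding close_def by linarith
      ultimately show ?thesis
        unfolding int_l1_ball_def by blast
    qed
    then have "(\<lambda>y i. y i - x i) ` {y \<in> Y. close x y} \<subseteq> int_l1_ball n R"
      by blast
    moreover have "inj_on (\<lambda>y i. y i - x i) {y \<in> Y. close x y}"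
      by (auto simp: inj_on_def fun_eq_iff)
    ultimately have "card {y \<in> Y. close x y} \<le> card (int_l1_ball n R)"
      using finite_int_l1_ball[OF assms(2)] by (intro card_inj_on_le) auto
    also have "\<dots> \<le> (3 * n) ^ R"
      by (rule card_int_l1_ball_le[OF assms(2)])
    finally show ?thesis .
  qed
  then have "\<exists>C\<subseteq>Y. card Y \<le> ((3 * n) ^ R + 1) * card C \<and>
      (\<forall>x\<in>C. \<forall>y\<in>C. x \<noteq> y \<longrightarrow> \<not> close x y)"
    by (rule bounded_degree_independent_subset[OF assms(1) close_sym])
  then show ?thesis
    by (simp only: close_def not_less)
qed

lemma exists_lattice_sphere_subset:
  assumes "n > 0" "m \<ge> 1"
  shows "\<exists>S Y. 0 < S \<and> S \<le> n * m\<^sup>2 \<and> Y \<subseteq> PiE {..<n} (\<lambda>_. {1..int m}) \<and>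
           (\<forall>x\<in>Y. (\<Sum>i<n. (x i)\<^sup>2) = int S) \<and> m ^ n \<le> n * m\<^sup>2 * card Y"
proof -
  define X where "X = PiE {..<n} (\<lambda>_. {1..int m})"
  define sq where "sq x = nat (\<Sum>i<n. (x i)\<^sup>2)" for x :: "nat \<Rightarrow> int"
  have "sq \<in> X \<rightarrow> {1..n * m\<^sup>2}"
  proof
    fix x assume "x \<in> X"
    then have x: "1 \<le> x i" "x i \<le> int m" if "i < n" for i
      using that by (auto simp: X_def PiE_iff)
    have "(1::int) \<le> (x 0)\<^sup>2"
      using x[of 0] assms(1) by (simp add: one_le_power)
    also have "\<dots> \<le> (\<Sum>i<n. (x i)\<^sup>2)"
      using assms(1) by (intro member_le_sum) auto
    finally have "1 \<le> (\<Sum>i<n. (x i)\<^sup>2)" .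
    moreover have "(\<Sum>i<n. (x i)\<^sup>2) \<le> (\<Sum>i<n. (int m)\<^sup>2)"
      using x by (intro sum_mono power_mono) (auto intro: order_trans[OF zero_le_one])
    ultimately show "sq x \<in> {1..n * m\<^sup>2}"
      by (auto simp: sq_def nat_le_iff)
  qed
  moreover have "finite X" "card X = m ^ n"
    by (simp_all add: X_def finite_PiE card_PiE)
  ultimately obtain S where S: "S \<in> {1..n * m\<^sup>2}" "m ^ n \<le> card (sq -` {S} \<inter> X) * (n * m\<^sup>2)"
    using pigeonhole_card[of sq X "{1..n * m\<^sup>2}"] assms by auto
  moreover have "(\<Sum>i<n. (x i)\<^sup>2) = int S" if "x \<in> sq -` {S} \<inter> X" for x
    using that S(1) unfolding sq_def by (auto simp: nat_eq_iff split: if_splits)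
  moreover have "sq -` {S} \<inter> X \<subseteq> PiE {..<n} (\<lambda>_. {1..int m})"
    by (simp add: X_def)
  ultimately show ?thesis
    by (intro exI[of _ S] exI[of _ "sq -` {S} \<inter> X"]) (simp add: mult.commute)
qed

lemma inner_le_of_sum_sq_diff:
  fixes x y :: "nat \<Rightarrow> int"
  assumes "(\<Sum>k<n. (x k)\<^sup>2) = int S" "(\<Sum>k<n. (y k)\<^sup>2) = int S" "int R \<le> (\<Sum>k<n. (x k - y k)\<^sup>2)"
  shows "of_int (\<Sum>k<n. x k * y k) + real R / 2 \<le> real S"
proof -
  have "int R \<le> (\<Sum>k<n. (x k)\<^sup>2) + (\<Sum>k<n. (y k)\<^sup>2) - 2 * (\<Sum>k<n. x k * y k)"
    using assms(3) by (simp add: power2_diff sum.distrib sum_subtractf sum_distrib_left mult_ac)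
  then have "real_of_int (int R) \<le> of_int (2 * int S - 2 * (\<Sum>k<n. x k * y k))"
    unfolding assms(1,2) by (simp only: of_int_le_iff mult_2)
  then show ?thesis
    by simp
qed

lemma spherical_code_of_int_points:
  fixes Y :: "(nat \<Rightarrow> int) set"
  assumes "finite Y" "S > 0" "r > 0"
    and nonzero: "\<forall>x\<in>Y. \<forall>k<n. x k \<noteq> 0"
    and sphere: "\<forall>x\<in>Y. (\<Sum>k<n. (x k)\<^sup>2) = int S"
    and separated: "\<forall>x\<in>Y. \<forall>y\<in>Y. x \<noteq> y \<longrightarrow> int R \<le> (\<Sum>k<n. (x k - y k)\<^sup>2)"
  shows "\<exists>u. spherical_code n r (r\<^sup>2 * R / (2 * S)) (card Y) u"
proof -
  obtain h where h: "bij_betw h {0..<card Y} Y"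
    using ex_bij_betw_nat_finite[OF assms(1)] by blast
  define t where "t = r / sqrt S"
  have t2: "t\<^sup>2 * S = r\<^sup>2"
    using assms(2) by (simp add: t_def power_divide)
  define u where "u i k = t * h i k" for i k
  have inner_u: "inner_n n (u i) (u j) = t\<^sup>2 * of_int (\<Sum>k<n. h i k * h j k)" for i j
    by (simp add: inner_n_def u_def sum_distrib_left power2_eq_square mult_ac)
  have hY: "h i \<in> Y" if "i < card Y" for i
    using h that by (auto simp: bij_betw_def)
  have "u i k \<noteq> 0" if "i < card Y" "k < n" for i k
    using nonzero hY[OF that(1)] that(2) assms(2,3) by (simp add: u_def t_def)
  moreover have "norm_n n (u i) = r" if "i < card Y" for i
  proof -
    have "(\<Sum>k<n. h i k * h i k) = int S"
      using sphere hY[OF that] by (simp add: power2_eq_square)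
    then have "inner_n n (u i) (u i) = r\<^sup>2"
      by (simp add: inner_u t2)
    then show ?thesis
      using assms(3) by (simp add: norm_n_def)
  qed
  moreover have "inner_n n (u i) (u j) + r\<^sup>2 * R / (2 * S) \<le> r\<^sup>2"
    if "i < card Y" "j < card Y" "i \<noteq> j" for i j
  proof -
    have "h i \<noteq> h j"
      using h that by (auto simp: bij_betw_def inj_on_def)
    then have "of_int (\<Sum>k<n. h i k * h j k) + real R / 2 \<le> real S"
      using separated sphere hY that by (intro inner_le_of_sum_sq_diff) auto
    then have "t\<^sup>2 * (of_int (\<Sum>k<n. h i k * h j k) + real R / 2) \<le> t\<^sup>2 * S"
      by (rule mult_left_mono) simp
    moreover have "t\<^sup>2 * (real R / 2) = r\<^sup>2 * R / (2 * S)"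
      using assms(2) by (simp flip: t2)
    ultimately show ?thesis
      by (simp add: inner_u t2 distrib_left)
  qed
  ultimately show ?thesis
    unfolding spherical_code_def by (intro exI[of _ u]) blast
qed

lemma exists_spherical_code:
  assumes "n > 0" "m \<ge> 1" "r > 0"
  shows "\<exists>N u. real m ^ n \<le> real N * (real n * (real m)\<^sup>2) * ((3 * real n) ^ R + 1) \<and>
           spherical_code n r (r\<^sup>2 * R / (2 * n * m\<^sup>2)) N u"
proof -
  obtain S Y where S: "0 < S" "S \<le> n * m\<^sup>2" and Y: "Y \<subseteq> PiE {..<n} (\<lambda>_. {1..int m})"
      "\<forall>x\<in>Y. (\<Sum>i<n. (x i)\<^sup>2) = int S" "m ^ n \<le> n * m\<^sup>2 * card Y"
    using exists_lattice_sphere_subset[OF assms(1,2)] by blast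
  have fin: "finite Y"
    using Y(1) by (rule finite_subset) (simp add: finite_PiE)
  have ext: "Y \<subseteq> extensional {..<n}"
    using Y(1) unfolding PiE_def by blast
  obtain C where C: "C \<subseteq> Y" "card Y \<le> ((3 * n) ^ R + 1) * card C"
      "\<forall>x\<in>C. \<forall>y\<in>C. x \<noteq> y \<longrightarrow> int R \<le> (\<Sum>i<n. (x i - y i)\<^sup>2)"
    using exists_separated_subset[OF fin assms(1) ext, of R] by blast
  have "\<forall>x\<in>C. \<forall>k<n. x k \<noteq> 0"
    using PiE_mem[OF subsetD[OF Y(1) subsetD[OF C(1)]]] by fastforce
  moreover have "\<forall>x\<in>C. (\<Sum>i<n. (x i)\<^sup>2) = int S"
    using C(1) Y(2) by blast
  ultimately obtain u where u: "spherical_code n r (r\<^sup>2 * R / (2 * S)) (card C) u"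
    using spherical_code_of_int_points[OF finite_subset[OF C(1) fin] S(1) assms(3) _ _ C(3)]
    by blast
  have "m ^ n \<le> n * m\<^sup>2 * card Y"
    by (rule Y(3))
  also have "\<dots> \<le> n * m\<^sup>2 * (((3 * n) ^ R + 1) * card C)"
    using C(2) by (rule mult_left_mono) simp
  finally have "real (m ^ n) \<le> real (card C * (n * m\<^sup>2) * ((3 * n) ^ R + 1))"
    by (simp only: of_nat_le_iff mult_ac)
  then have "real m ^ n \<le> real (card C) * (real n * (real m)\<^sup>2) * ((3 * real n) ^ R + 1)"
    by (simp add: distrib_left)
  moreover have "r\<^sup>2 * R / (2 * n * m\<^sup>2) \<le> r\<^sup>2 * R / (2 * S)"
  proof -
    have "real S \<le> real n * (real m)\<^sup>2"
      using S(2) by (simp flip: of_nat_power of_nat_mult)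
    then show ?thesis
      using S(1) assms by (intro divide_left_mono) auto
  qed
  ultimately show ?thesis
    using spherical_code_mono[OF u] by blast
qed

section \<open>Rate of the lattice codes\<close>

lemma log_card_lower_bound:
  fixes N m n R :: nat
  assumes "real m ^ n \<le> real N * (real n * (real m)\<^sup>2) * ((3 * real n) ^ R + 1)" "m \<ge> 1" "n \<ge> 1"
  shows "n * log 2 m - log 2 n - 2 * log 2 m - 1 - R * log 2 (3 * n) \<le> log 2 N"
proof -
  have "1 \<le> (3 * real n) ^ R"
    by (rule one_le_power) (use assms(3) in simp)
  then have "(3 * real n) ^ R + 1 \<le> 2 * (3 * real n) ^ R"
    by linarith
  with assms(1) have "real m ^ n \<le> real N * (real n * (real m)\<^sup>2) * (2 * (3 * real n) ^ R)"
    by (rule order_trans[OF _ mult_left_mono]) simp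
  moreover have "N > 0"
  proof (rule ccontr)
    assume "\<not> N > 0"
    then have "real m ^ n \<le> 0"
      using assms(1) by simp
    moreover have "0 < real m ^ n"
      using assms(2) by (simp del: of_nat_power)
    ultimately show False
      by linarith
  qed
  ultimately have
    "log 2 (real m ^ n) \<le> log 2 (real N * (real n * (real m)\<^sup>2) * (2 * (3 * real n) ^ R))"
    using assms(2,3) by simp
  then show ?thesis
    using assms(2,3) \<open>N > 0\<close> by (simp add: log_mult log_nat_power distrib_left)
qed

lemma nat_floor_bounds:
  assumes "a \<ge> 2"
  shows "a / 2 \<le> real (nat \<lfloor>a\<rfloor>)" "real (nat \<lfloor>a\<rfloor>) \<le> a"
  using assms of_int_floor_le[of a] real_of_int_floor_add_one_gt[of a] by linarith+

text \<open>The lower bound on \<open>log\<^sub>2 N\<close> that \<open>log_card_lower_bound\<close> gives for \<open>m = \<lfloor>a\<rfloor>\<close>,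
\<open>a = n powr (1/4) / log\<^sup>2 n\<close>, and \<open>R \<le> c n / log\<^sup>3 n + 1\<close>, using \<open>a/2 \<le> m \<le> a\<close>.\<close>

definition lattice_code_rate_bound :: "real \<Rightarrow> nat \<Rightarrow> real" where
  "lattice_code_rate_bound c n =
     n * (log 2 (n powr (1/4) / (log 2 n)\<^sup>2) - 1) - log 2 n - 2 * log 2 (n powr (1/4) / (log 2 n)\<^sup>2)
     - 1 - (c * (n / (log 2 n) ^ 3) + 1) * log 2 (3 * n)"

lemma lattice_code_rate_bound_tendsto:
  "((\<lambda>n. lattice_code_rate_bound c n / (n * log 2 n)) \<longlongrightarrow> 1/4) sequentially"
proof -
  define A where "A n = n * (log 2 (n powr (1/4) / (log 2 n)\<^sup>2) - 1) - log 2 n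
      - 2 * log 2 (n powr (1/4) / (log 2 n)\<^sup>2) - 1 - log 2 (3 * n)" for n :: nat
  define B where "B n = n / (log 2 n) ^ 3 * log 2 (3 * n)" for n :: nat
  have "lattice_code_rate_bound c n = A n - c * B n" for n
    by (simp add: lattice_code_rate_bound_def A_def B_def algebra_simps)
  then have eq: "lattice_code_rate_bound c n / (n * log 2 n)
      = A n / (n * log 2 n) - c * (B n / (n * log 2 n))"
    for n
    by (simp add: diff_divide_distrib)
  have "((\<lambda>n. A n / (n * log 2 n)) \<longlongrightarrow> 1/4) sequentially"
    unfolding A_def by real_asymp
  moreover have "((\<lambda>n. B n / (n * log 2 n)) \<longlongrightarrow> 0) sequentially"
    unfolding B_def by real_asymp
  ultimately have
    "((\<lambda>n. A n / (n * log 2 n) - c * (B n / (n * log 2 n))) \<longlongrightarrow> 1/4 - c * 0) sequentially"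
    by (intro tendsto_diff tendsto_mult tendsto_const)
  then show ?thesis
    unfolding eq by simp
qed

lemma log_nat_floor_bounds:
  assumes "a \<ge> 2"
  shows "log 2 a - 1 \<le> log 2 (nat \<lfloor>a\<rfloor>)" "log 2 (nat \<lfloor>a\<rfloor>) \<le> log 2 a"
proof -
  have "log 2 a - 1 = log 2 (a / 2)"
    using assms by (simp add: log_divide)
  also have "\<dots> \<le> log 2 (nat \<lfloor>a\<rfloor>)"
    using nat_floor_bounds[OF assms] assms by simp
  finally show "log 2 a - 1 \<le> log 2 (nat \<lfloor>a\<rfloor>)" .
  show "log 2 (nat \<lfloor>a\<rfloor>) \<le> log 2 a"
    using nat_floor_bounds[OF assms] assms by simp
qed

lemma lattice_separation_bounds:
  fixes P \<sigma> L :: real and n m :: nat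
  assumes "P > 0" "\<sigma> > 0" "L \<ge> 1" "n \<ge> 1" "m \<ge> 1" "real m \<le> n powr (1/4) / L\<^sup>2"
  defines "R \<equiv> nat \<lceil>4 * \<sigma> * sqrt (n * P) * L * (real m)\<^sup>2 / P\<rceil>"
  shows "2 * \<sigma> * L * sqrt (n * P) \<le> (sqrt (n * P))\<^sup>2 * R / (2 * n * m\<^sup>2)"
    and "R \<le> 4 * \<sigma> / sqrt P * (n / L ^ 3) + 1"
proof -
  let ?r = "sqrt (n * P)"
  have "0 \<le> 4 * \<sigma> * ?r * L * (real m)\<^sup>2 / P"
    using assms(1-3) by simp
  then have "real R = of_int \<lceil>4 * \<sigma> * ?r * L * (real m)\<^sup>2 / P\<rceil>"
    by (simp add: R_def)
  then have R: "4 * \<sigma> * ?r * L * (real m)\<^sup>2 / P \<le> R" "R \<le> 4 * \<sigma> * ?r * L * (real m)\<^sup>2 / P + 1"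
    by linarith+
  have "2 * \<sigma> * L * ?r = P / (2 * (real m)\<^sup>2) * (4 * \<sigma> * ?r * L * (real m)\<^sup>2 / P)"
    using assms(1,5) by (simp add: field_simps)
  also have "\<dots> \<le> P / (2 * (real m)\<^sup>2) * R"
    using R(1) assms(1) by (intro mult_left_mono) auto
  also have "\<dots> = ?r\<^sup>2 * R / (2 * n * m\<^sup>2)"
    using assms(1,4) by (simp add: field_simps)
  finally show "2 * \<sigma> * L * ?r \<le> ?r\<^sup>2 * R / (2 * n * m\<^sup>2)" .
  have "(n powr (1/4) / L\<^sup>2)\<^sup>2 = sqrt n / L ^ 4"
    using assms(4) by (simp add: power_divide powr_powr flip: powr_realpow powr_half_sqrt)
  moreover have "(real m)\<^sup>2 \<le> (n powr (1/4) / L\<^sup>2)\<^sup>2"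
    using assms(6) by (rule power_mono) simp
  ultimately have "4 * \<sigma> * ?r * L * (real m)\<^sup>2 / P \<le> 4 * \<sigma> * ?r * L * (sqrt n / L ^ 4) / P"
    using assms(1-3) by (intro divide_right_mono mult_left_mono) auto
  also have "\<dots> = 4 * \<sigma> / sqrt P * (n / L ^ 3)"
  proof -
    have "?r * sqrt n = n * sqrt P"
      by (simp add: real_sqrt_mult)
    moreover have "sqrt P * sqrt P = P"
      using assms(1) by simp
    moreover have "L ^ 4 = L * L ^ 3"
      by (simp add: power_Suc[symmetric])
    ultimately show ?thesis
      using assms(1,3) by (simp add: field_simps)
  qed
  finally show "R \<le> 4 * \<sigma> / sqrt P * (n / L ^ 3) + 1"
    using R(2) by linarith
qed

lemma exists_lattice_code:
  fixes P \<sigma> :: real and n :: nat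
  assumes "P > 0" "\<sigma> > 0" "log 2 n \<ge> 1" "n powr (1/4) / (log 2 n)\<^sup>2 \<ge> 2"
  shows "\<exists>N u. spherical_code n (sqrt (n * P)) (2 * \<sigma> * log 2 n * sqrt (n * P)) N u \<and>
           lattice_code_rate_bound (4 * \<sigma> / sqrt P) n \<le> log 2 N"
proof -
  define L where "L = log 2 (real n)"
  define a where "a = real n powr (1/4) / L\<^sup>2"
  define r where "r = sqrt (n * P)"
  define m where "m = nat \<lfloor>a\<rfloor>"
  define R where "R = nat \<lceil>4 * \<sigma> * r * L * (real m)\<^sup>2 / P\<rceil>"
  have L: "L \<ge> 1"
    using assms(3) by (simp add: L_def)
  then have n: "n \<ge> 1"
    by (cases "n = 0") (auto simp: L_def log_def)
  have a: "a \<ge> 2"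
    using assms(4) by (simp add: a_def L_def)
  have m: "m \<ge> 1" "m \<le> a"
    using nat_floor_bounds[OF a] a by (auto simp: m_def)
  note R_bounds = lattice_separation_bounds[OF assms(1,2) L n m(1) m(2)[unfolded a_def],
      folded r_def, folded R_def]
  obtain N u where N: "real m ^ n \<le> real N * (real n * (real m)\<^sup>2) * ((3 * real n) ^ R + 1)"
      and u: "spherical_code n r (r\<^sup>2 * R / (2 * n * m\<^sup>2)) N u"
    using exists_spherical_code[OF _ m(1), of n r R] n by (force simp: r_def assms(1))
  have code: "spherical_code n r (2 * \<sigma> * L * r) N u"
    by (rule spherical_code_mono[OF u R_bounds(1)])
  have "R * log 2 (3 * n) \<le> (4 * \<sigma> / sqrt P * (n / L ^ 3) + 1) * log 2 (3 * n)"
    using R_bounds(2) n by (intro mult_right_mono) auto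
  moreover have "n * (log 2 a - 1) \<le> n * log 2 m"
    using log_nat_floor_bounds(1)[OF a] by (intro mult_left_mono) (simp_all add: m_def)
  moreover have "log 2 m \<le> log 2 a"
    using log_nat_floor_bounds(2)[OF a] by (simp add: m_def)
  moreover have "lattice_code_rate_bound (4 * \<sigma> / sqrt P) n
      = n * (log 2 a - 1) - log 2 n - 2 * log 2 a - 1
        - (4 * \<sigma> / sqrt P * (n / L ^ 3) + 1) * log 2 (3 * n)"
    by (simp add: lattice_code_rate_bound_def a_def L_def)
  ultimately have "lattice_code_rate_bound (4 * \<sigma> / sqrt P) n
      \<le> n * log 2 m - log 2 n - 2 * log 2 m - 1 - R * log 2 (3 * n)"
    by linarith
  also have "\<dots> \<le> log 2 N"
    using N m(1) n by (rule log_card_lower_bound)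
  finally show ?thesis
    using code unfolding r_def L_def by blast
qed

lemma exists_lattice_code_sequence:
  fixes P \<sigma> :: real
  assumes "P > 0" "\<sigma> > 0"
  shows "\<exists>(Nf :: nat \<Rightarrow> nat) uf.
           (\<forall>\<^sub>F n in sequentially.
              spherical_code n (sqrt (n * P)) (2 * \<sigma> * log 2 n * sqrt (n * P)) (Nf n) (uf n)) \<and>
           (\<forall>\<epsilon>>0. \<forall>\<^sub>F n in sequentially. 1/4 - \<epsilon> \<le> log 2 (Nf n) / (n * log 2 n))"
proof -
  have "\<forall>\<^sub>F n in sequentially. 1 \<le> log 2 (real n)"
    by real_asymp
  moreover have "\<forall>\<^sub>F n in sequentially. 2 \<le> real n powr (1/4) / (log 2 n)\<^sup>2"
    by real_asymp
  ultimately have "\<forall>\<^sub>F n in sequentially. \<exists>N u.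
      spherical_code n (sqrt (n * P)) (2 * \<sigma> * log 2 n * sqrt (n * P)) N u \<and>
      lattice_code_rate_bound (4 * \<sigma> / sqrt P) n \<le> log 2 N"
    by eventually_elim (rule exists_lattice_code[OF assms])
  then obtain n0 where "\<forall>n\<ge>n0. \<exists>N u.
      spherical_code n (sqrt (n * P)) (2 * \<sigma> * log 2 n * sqrt (n * P)) N u \<and>
      lattice_code_rate_bound (4 * \<sigma> / sqrt P) n \<le> log 2 N"
    by (auto simp: eventually_sequentially)
  then obtain Nf uf where codes: "\<And>n. n \<ge> n0 \<Longrightarrow>
      spherical_code n (sqrt (n * P)) (2 * \<sigma> * log 2 n * sqrt (n * P)) (Nf n) (uf n) \<and>
      lattice_code_rate_bound (4 * \<sigma> / sqrt P) n \<le> log 2 (Nf n)"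
    by metis
  have "\<forall>\<^sub>F n in sequentially. 1/4 - \<epsilon> \<le> log 2 (Nf n) / (n * log 2 n)" if "\<epsilon> > 0" for \<epsilon>
  proof -
    have "\<forall>\<^sub>F n in sequentially.
        1/4 - \<epsilon> < lattice_code_rate_bound (4 * \<sigma> / sqrt P) n / (n * log 2 n)"
      by (rule order_tendstoD(1)[OF lattice_code_rate_bound_tendsto]) (use that in simp)
    moreover have "\<forall>\<^sub>F n in sequentially. 0 < real n * log 2 n"
      by real_asymp
    ultimately show ?thesis
      using eventually_ge_at_top[of n0]
    proof eventually_elim
      case (elim n)
      then show ?case
        using codes[of n] by (smt (verit) divide_right_mono)
    qed
  qed
  moreover have "\<forall>\<^sub>F n in sequentially.
      spherical_code n (sqrt (n * P)) (2 * \<sigma> * log 2 n * sqrt (n * P)) (Nf n) (uf n)"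
    unfolding eventually_sequentially using codes by blast
  ultimately show ?thesis
    by blast
qed

lemma achievable_lin_rateI:
  assumes "R > 0" "l \<longlonglongrightarrow> 0"
    and codes: "\<forall>\<^sub>F n in sequentially. DI_code n P \<sigma> (Nf n) (l n) (l n) (uf n) (Df n)"
    and rate: "\<forall>\<epsilon>>0. \<forall>\<^sub>F n in sequentially. R - \<epsilon> \<le> log 2 (Nf n) / (n * log 2 n)"
  shows "achievable_lin_rate P \<sigma> R"
  unfolding achievable_lin_rate_def
proof (intro conjI allI impI)
  fix \<epsilon> :: real assume "\<epsilon> > 0"
  with codes rate have "\<forall>\<^sub>F n in sequentially. DI_code n P \<sigma> (Nf n) (l n) (l n) (uf n) (Df n) \<and>
      R - \<epsilon> \<le> log 2 (Nf n) / (n * log 2 n)"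
    by (auto intro: eventually_conj)
  then obtain n0 where "\<forall>n\<ge>n0. DI_code n P \<sigma> (Nf n) (l n) (l n) (uf n) (Df n) \<and>
      R - \<epsilon> \<le> log 2 (Nf n) / (n * log 2 n)"
    by (auto simp: eventually_sequentially)
  then show "\<exists>n0 l1 l2. l1 \<longlonglongrightarrow> 0 \<and> l2 \<longlonglongrightarrow> 0 \<and>
      (\<forall>n\<ge>n0. \<exists>N u D. DI_code n P \<sigma> N (l1 n) (l2 n) u D \<and> R - \<epsilon> \<le> log 2 N / (n * log 2 n))"
    using assms(2) by blast
qed (rule assms(1))

theorem theorem1:
  fixes P \<sigma> :: real
  assumes "P > 0" and "\<sigma> > 0"
  shows "(\<exists>(Nf :: nat \<Rightarrow> nat) (uf :: nat \<Rightarrow> nat \<Rightarrow> nat \<Rightarrow> real)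
            (Df :: nat \<Rightarrow> nat \<Rightarrow> (nat \<Rightarrow> real) set).
            (\<forall>\<^sub>F n in sequentially.
               DI_code n P \<sigma> (Nf n) (2 * Phi (- log 2 (real n))) (2 * Phi (- log 2 (real n)))
                 (uf n) (Df n) \<and>
               (\<forall>i<Nf n. norm_n n (uf n i) = sqrt (real n * P)) \<and>
               angle_dense n (Nf n) (uf n) (2 * \<sigma> * log 2 (real n)) \<and>
               (\<forall>i<Nf n. Df n i = {y \<in> Rn n.
                   norm_n n (\<lambda>k. proj_n n (uf n i) y k - uf n i k) \<le> \<sigma> * log 2 (real n)})) \<and>
            (\<forall>\<epsilon>>0. \<forall>\<^sub>F n in sequentially.
               log 2 (real (Nf n)) / (real n * log 2 (real n)) \<ge> 1/4 - \<epsilon>))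
         \<and> achievable_lin_rate P \<sigma> (1/4)"
proof -
  obtain Nf uf where
    codes: "\<forall>\<^sub>F n in sequentially.
      spherical_code n (sqrt (n * P)) (2 * \<sigma> * log 2 n * sqrt (n * P)) (Nf n) (uf n)" and
    rate: "\<forall>\<epsilon>>0. \<forall>\<^sub>F n in sequentially. 1/4 - \<epsilon> \<le> log 2 (Nf n) / (n * log 2 n)"
    using exists_lattice_code_sequence[OF assms] by blast
  define Df where "Df n = (\<lambda>i. decoding_set n (\<sigma> * log 2 n) (uf n i))" for n
  have props: "\<forall>\<^sub>F n in sequentially.
      DI_code n P \<sigma> (Nf n) (2 * Phi (- log 2 n)) (2 * Phi (- log 2 n)) (uf n) (Df n) \<and>
      (\<forall>i<Nf n. norm_n n (uf n i) = sqrt (n * P)) \<and> angle_dense n (Nf n) (uf n) (2 * \<sigma> * log 2 n)"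
    using codes eventually_gt_at_top[of 0] unfolding Df_def
    by eventually_elim (rule DI_code_of_spherical_code[OF assms])
  then have "achievable_lin_rate P \<sigma> (1/4)"
    by (intro achievable_lin_rateI[OF _ tendsto_mult_right_zero[OF Phi_neg_log_tendsto_0] _ rate])
      (auto elim: eventually_mono)
  with props rate show ?thesis
    by (intro conjI exI[of _ Nf] exI[of _ uf] exI[of _ Df]) (simp_all add: Df_def decoding_set_def)
qed

end
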